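(* Let $\mathcal{S}=(Q,E,\delta,Q_0,\Sigma,\ell)$ be a labeled finite-state automaton, $Q_S\subset Q$ a set of secret states, and $K$ a positive integer with $K>2^{|Q|}-2$. Then $\mathcal{S}$ is infinite-step opaque with respect to $Q_S$ if and only if $\mathcal{S}$ is $K$-step opaque with respect to $Q_S$.
   Context: A labeled finite-state automaton is $\mathcal{S}=(Q,E,\delta,Q_0,\Sigma,\ell)$ with finite state set $Q$, finite event alphabet $E$, transition relation $\delta\subset Q\times E\times Q$, initial states $Q_0\subset Q$, finite output alphabet $\Sigma$, and labeling $\ell:E\to\Sigma\cup\{\epsilon\}$ ($\epsilon$ the empty word), extended morphically to event words. A run $q\xrightarrow{s}q'$ ($s\in E^*$) means a sequence of transitions from $q$ to $q'$ reading $s$ (the empty word gives $q=q'$). Infinite-step opacity: $\mathcal{S}$ is infinite-step opaque w.r.t. $Q_S$ if for every run $q_0\xrightarrow{s_1}q_1\xrightarrow{s_2}q_2$ with $q_0\in Q_0$ and $q_1\in Q_S$ there is a run $q_0'\xrightarrow{s_1'}q_1'\xrightarrow{s_2'}q_2'$ with $q_0'\in Q_0$, $q_1'\in Q\setminus Q_S$, $\ell(s_1)=\ell(s_1')$, $\ell(s_2)=\ell(s_2')$. $K$-step opacity ($K$ a positive integer): same as infinite-step opacity but the requirement is only imposed on runs with $|\ell(s_2)|\le K$. *)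

theory Defs
  imports Main
begin

text \<open>Labeled finite-state automaton S = (Q, E, delta, Q0, Sig, ell).
  The labeling ell maps events to 's option, where None encodes the empty word epsilon
  and Some a encodes the output letter a.\<close>

definition is_LFSA ::
  "'q set \<Rightarrow> 'e set \<Rightarrow> ('q \<times> 'e \<times> 'q) set \<Rightarrow> 'q set \<Rightarrow> 's set \<Rightarrow> ('e \<Rightarrow> 's option) \<Rightarrow> bool" where
  "is_LFSA Q E delta Q0 Sig ell \<longleftrightarrow>
     finite Q \<and> finite E \<and> finite Sig \<and> delta \<subseteq> Q \<times> E \<times> Q \<and> Q0 \<subseteq> Q \<and>
     (\<forall>e\<in>E. ell e = None \<or> (\<exists>a\<in>Sig. ell e = Some a))"

fun run :: "('q \<times> 'e \<times> 'q) set \<Rightarrow> 'q \<Rightarrow> 'e list \<Rightarrow> 'q \<Rightarrow> bool" where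
  "run delta q [] q' \<longleftrightarrow> q = q'"
| "run delta q (e # s) q' \<longleftrightarrow> (\<exists>p. (q, e, p) \<in> delta \<and> run delta p s q')"

definition lab :: "('e \<Rightarrow> 's option) \<Rightarrow> 'e list \<Rightarrow> 's list" where
  "lab ell s = concat (map (\<lambda>e. case ell e of None \<Rightarrow> [] | Some a \<Rightarrow> [a]) s)"

definition infinite_step_opaque ::
  "'q set \<Rightarrow> ('q \<times> 'e \<times> 'q) set \<Rightarrow> 'q set \<Rightarrow> ('e \<Rightarrow> 's option) \<Rightarrow> 'q set \<Rightarrow> bool" where
  "infinite_step_opaque Q delta Q0 ell QS \<longleftrightarrow>
     (\<forall>q0 q1 q2 s1 s2. q0 \<in> Q0 \<and> q1 \<in> QS \<and> run delta q0 s1 q1 \<and> run delta q1 s2 q2 \<longrightarrow>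
        (\<exists>q0' q1' q2' s1' s2'. q0' \<in> Q0 \<and> q1' \<in> Q - QS \<and>
            run delta q0' s1' q1' \<and> run delta q1' s2' q2' \<and>
            lab ell s1 = lab ell s1' \<and> lab ell s2 = lab ell s2'))"

definition K_step_opaque ::
  "nat \<Rightarrow> 'q set \<Rightarrow> ('q \<times> 'e \<times> 'q) set \<Rightarrow> 'q set \<Rightarrow> ('e \<Rightarrow> 's option) \<Rightarrow> 'q set \<Rightarrow> bool" where
  "K_step_opaque K Q delta Q0 ell QS \<longleftrightarrow>
     (\<forall>q0 q1 q2 s1 s2. q0 \<in> Q0 \<and> q1 \<in> QS \<and> run delta q0 s1 q1 \<and> run delta q1 s2 q2 \<and>
          length (lab ell s2) \<le> K \<longrightarrow>
        (\<exists>q0' q1' q2' s1' s2'. q0' \<in> Q0 \<and> q1' \<in> Q - QS \<and>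
            run delta q0' s1' q1' \<and> run delta q1' s2' q2' \<and>
            lab ell s1 = lab ell s1' \<and> lab ell s2 = lab ell s2'))"

end

theory Submission
  imports Defs
begin

text \<open>Suppose a secret state q is entered with observation u and, afterwards, some word is
  observable from q that is not observable from any non-secret state entered with observation u.
  Take such a word w of minimal length and let F i be the set of states from which the suffix of w
  after position i is observable. For i < |w| each F i is a nonempty proper subset of the states:
  it contains the state reached from q, and by minimality the prefix is observable from some
  non-secret state, whose successor must lie outside F i. Moreover F i = F j with i < j would
  allow cutting out the segment between i and j, giving a shorter such word. Hence
  |w| \<le> 2^|Q| - 2, and K-step opacity already excludes w.\<close>

definition reach :: "('q \<times> 'e \<times> 'q) set \<Rightarrow> ('e \<Rightarrow> 's option) \<Rightarrow> 'q set \<Rightarrow> 's list \<Rightarrow> 'q set" where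
  "reach delta ell X v = {q'. \<exists>q\<in>X. \<exists>s. run delta q s q' \<and> lab ell s = v}"

lemma run_append: "run delta q (s @ t) q' \<longleftrightarrow> (\<exists>p. run delta q s p \<and> run delta p t q')"
  by (induction s arbitrary: q) auto

lemma run_in_states:
  assumes "run delta q s q'" "q \<in> Q" "delta \<subseteq> Q \<times> E \<times> Q"
  shows "q' \<in> Q"
  using assms by (induction s arbitrary: q) auto

lemma lab_append: "lab ell (s @ t) = lab ell s @ lab ell t"
  by (simp add: lab_def)

lemma lab_Cons: "lab ell (e # s) = (case ell e of None \<Rightarrow> [] | Some a \<Rightarrow> [a]) @ lab ell s"
  by (simp add: lab_def)

lemma lab_eq_append_split:
  "lab ell s = v @ w \<Longrightarrow> \<exists>s1 s2. s = s1 @ s2 \<and> lab ell s1 = v \<and> lab ell s2 = w"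
proof (induction s arbitrary: v)
  case Nil
  then show ?case by (auto simp: lab_def)
next
  case (Cons e s)
  show ?case
  proof (cases "ell e")
    case None
    with Cons.prems have "lab ell s = v @ w" by (simp add: lab_Cons)
    with Cons.IH obtain s1 s2 where "s = s1 @ s2" "lab ell s1 = v" "lab ell s2 = w" by blast
    moreover have "lab ell (e # s1) = lab ell s1" using None by (simp add: lab_Cons)
    ultimately show ?thesis by (metis append_Cons)
  next
    case (Some a)
    show ?thesis
    proof (cases v)
      case Nil
      have "lab ell [] = []" by (simp add: lab_def)
      with Cons.prems Nil show ?thesis by (metis append_Nil)
    next
      case v: (Cons b v')
      with Some Cons.prems have "a = b" "lab ell s = v' @ w" by (auto simp: lab_Cons)
      with Cons.IH obtain s1 s2 where "s = s1 @ s2" "lab ell s1 = v'" "lab ell s2 = w" by blast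
      moreover have "lab ell (e # s1) = b # lab ell s1" using Some \<open>a = b\<close> by (simp add: lab_Cons)
      ultimately show ?thesis using v by (metis append_Cons)
    qed
  qed
qed

lemma reach_append: "reach delta ell X (v @ w) = reach delta ell (reach delta ell X v) w"
proof
  show "reach delta ell X (v @ w) \<subseteq> reach delta ell (reach delta ell X v) w"
  proof
    fix x assume "x \<in> reach delta ell X (v @ w)"
    then obtain q u where "q \<in> X" "run delta q u x" "lab ell u = v @ w"
      unfolding reach_def by blast
    obtain s t where "u = s @ t" "lab ell s = v" "lab ell t = w"
      using lab_eq_append_split[OF \<open>lab ell u = v @ w\<close>] by blast
    with \<open>run delta q u x\<close> obtain p where "run delta q s p" "run delta p t x"
      by (auto simp: run_append)
    with \<open>q \<in> X\<close> \<open>lab ell s = v\<close> \<open>lab ell t = w\<close>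
    show "x \<in> reach delta ell (reach delta ell X v) w" unfolding reach_def by blast
  qed
  show "reach delta ell (reach delta ell X v) w \<subseteq> reach delta ell X (v @ w)"
  proof
    fix x assume "x \<in> reach delta ell (reach delta ell X v) w"
    then obtain q p s t where "q \<in> X" "run delta q s p" "lab ell s = v" "run delta p t x" "lab ell t = w"
      unfolding reach_def by blast
    then have "run delta q (s @ t) x" "lab ell (s @ t) = v @ w"
      by (auto simp: run_append lab_append)
    with \<open>q \<in> X\<close> show "x \<in> reach delta ell X (v @ w)" unfolding reach_def by blast
  qed
qed

lemma reach_subset_states:
  assumes "X \<subseteq> Q" "delta \<subseteq> Q \<times> E \<times> Q"
  shows "reach delta ell X v \<subseteq> Q"
proof
  fix q' assume "q' \<in> reach delta ell X v"
  then obtain q s where "q \<in> X" "run delta q s q'" unfolding reach_def by blast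
  with assms show "q' \<in> Q" using run_in_states[of delta q s q' Q E] by blast
qed

lemma reach_nonempty_iff: "reach delta ell X v \<noteq> {} \<longleftrightarrow> (\<exists>q\<in>X. reach delta ell {q} v \<noteq> {})"
  unfolding reach_def by blast

lemma card_proper_nonempty_subsets:
  assumes "finite Q"
  shows "card (Pow Q - {{}, Q}) = 2 ^ card Q - 2"
proof (cases "Q = {}")
  case False
  then have "card {{}, Q} = 2" by simp
  with assms show ?thesis by (simp add: card_Diff_subset card_Pow)
qed simp

lemma bound_by_proper_nonempty_subsets:
  fixes n :: nat
  assumes "finite Q" "inj_on F {..<n}" "\<And>i. i < n \<Longrightarrow> F i \<in> Pow Q - {{}, Q}"
  shows "n \<le> 2 ^ card Q - 2"
proof -
  have "card {..<n} \<le> card (Pow Q - {{}, Q})"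
    using assms by (intro card_inj_on_le[OF assms(2)]) auto
  with assms(1) show ?thesis by (simp add: card_proper_nonempty_subsets)
qed

lemma reach_nonempty_if_short_words:
  assumes "finite Q" "delta \<subseteq> Q \<times> E \<times> Q" "X \<subseteq> Q" "Y \<subseteq> Q"
    and short: "\<And>w. length w \<le> 2 ^ card Q - 2 \<Longrightarrow> reach delta ell X w \<noteq> {} \<Longrightarrow>
      reach delta ell Y w \<noteq> {}"
  shows "reach delta ell X w \<noteq> {} \<Longrightarrow> reach delta ell Y w \<noteq> {}"
proof (induction "length w" arbitrary: w rule: less_induct)
  case less
  define F where "F i = {q \<in> Q. reach delta ell {q} (drop i w) \<noteq> {}}" for i
  let ?RX = "\<lambda>i. reach delta ell X (take i w)" and ?RY = "\<lambda>i. reach delta ell Y (take i w)"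
  have meets_F: "reach delta ell Z (drop i w) \<noteq> {} \<longleftrightarrow> Z \<inter> F i \<noteq> {}" if "Z \<subseteq> Q" for Z i
    unfolding reach_nonempty_iff[of delta ell Z] F_def using that by auto
  have RX_Q: "?RX i \<subseteq> Q" and RY_Q: "?RY i \<subseteq> Q" for i
    by (rule reach_subset_states[OF assms(3,2)], rule reach_subset_states[OF assms(4,2)])
  have split: "reach delta ell Z w = reach delta ell (reach delta ell Z (take i w)) (drop i w)" for Z i
    using reach_append[of delta ell Z "take i w" "drop i w"] by simp
  have RX_F: "?RX i \<inter> F i \<noteq> {}" for i
    using less.prems split[of X i] meets_F[OF RX_Q] by simp
  show ?case
  proof
    assume Y_w: "reach delta ell Y w = {}"
    have RY_F: "?RY i \<inter> F i = {}" for i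
      using Y_w split[of Y i] meets_F[OF RY_Q] by simp
    have F_proper: "F i \<in> Pow Q - {{}, Q}" if "i < length w" for i
    proof -
      have "?RX i \<noteq> {}" using RX_F by blast
      with that have "?RY i \<noteq> {}" by (intro less.hyps) auto
      with RY_F RY_Q have "F i \<noteq> Q" by blast
      with RX_F show ?thesis unfolding F_def by auto
    qed
    have F_inj: "inj_on F {..<length w}"
    proof (rule linorder_inj_onI')
      fix i j assume "i \<in> {..<length w}" "j \<in> {..<length w}" "i < j"
      show "F i \<noteq> F j"
      proof
        assume F_eq: "F i = F j"
        define w' where "w' = take i w @ drop j w"
        have reach_w': "reach delta ell Z w' = reach delta ell (reach delta ell Z (take i w)) (drop j w)"
          for Z unfolding w'_def by (rule reach_append)
        have "reach delta ell X w' \<noteq> {}"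
          using RX_F[of i] F_eq reach_w' meets_F[OF RX_Q] by simp
        moreover have "length w' < length w"
          using \<open>i < j\<close> \<open>j \<in> {..<length w}\<close> unfolding w'_def by simp
        ultimately have "reach delta ell Y w' \<noteq> {}" using less.hyps by blast
        then show False
          using RY_F[of i] F_eq reach_w' meets_F[OF RY_Q] by simp
      qed
    qed
    have "length w \<le> 2 ^ card Q - 2"
      using bound_by_proper_nonempty_subsets[OF assms(1) F_inj F_proper] .
    with short less.prems Y_w show False by blast
  qed
qed

lemma opacity_condition_iff_reach:
  "(\<forall>q0 q1 q2 s1 s2. q0 \<in> Q0 \<and> q1 \<in> QS \<and> run delta q0 s1 q1 \<and> run delta q1 s2 q2 \<and>
        P (lab ell s2) \<longrightarrow>
      (\<exists>q0' q1' q2' s1' s2'. q0' \<in> Q0 \<and> q1' \<in> Q - QS \<and>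
        run delta q0' s1' q1' \<and> run delta q1' s2' q2' \<and>
        lab ell s1 = lab ell s1' \<and> lab ell s2 = lab ell s2')) \<longleftrightarrow>
    (\<forall>u w. \<forall>q \<in> reach delta ell Q0 u \<inter> QS. P w \<longrightarrow> reach delta ell {q} w \<noteq> {} \<longrightarrow>
      reach delta ell (reach delta ell Q0 u \<inter> (Q - QS)) w \<noteq> {})"
  (is "?runs \<longleftrightarrow> ?reach")
proof
  assume ?runs
  show ?reach
  proof (intro allI ballI impI)
    fix u w q
    assume "q \<in> reach delta ell Q0 u \<inter> QS" "P w" "reach delta ell {q} w \<noteq> {}"
    then obtain q0 s1 q2 s2 where "q0 \<in> Q0" "q \<in> QS" "run delta q0 s1 q" "lab ell s1 = u"
      "run delta q s2 q2" "lab ell s2 = w"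
      unfolding reach_def by blast
    with \<open>?runs\<close> \<open>P w\<close> obtain q0' q1' q2' s1' s2' where "q0' \<in> Q0" "q1' \<in> Q - QS"
      "run delta q0' s1' q1'" "run delta q1' s2' q2'" "lab ell s1' = u" "lab ell s2' = w"
      by metis
    then show "reach delta ell (reach delta ell Q0 u \<inter> (Q - QS)) w \<noteq> {}"
      unfolding reach_def by blast
  qed
next
  assume ?reach
  show ?runs
  proof (intro allI impI)
    fix q0 q1 q2 s1 s2
    assume "q0 \<in> Q0 \<and> q1 \<in> QS \<and> run delta q0 s1 q1 \<and> run delta q1 s2 q2 \<and> P (lab ell s2)"
    then have "q1 \<in> reach delta ell Q0 (lab ell s1) \<inter> QS" "P (lab ell s2)"
      "reach delta ell {q1} (lab ell s2) \<noteq> {}"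
      unfolding reach_def by blast+
    with \<open>?reach\<close> have "reach delta ell (reach delta ell Q0 (lab ell s1) \<inter> (Q - QS)) (lab ell s2) \<noteq> {}"
      by blast
    then obtain q0' q1' q2' s1' s2' where "q0' \<in> Q0" "q1' \<in> Q - QS"
      "run delta q0' s1' q1'" "run delta q1' s2' q2'" "lab ell s1' = lab ell s1" "lab ell s2' = lab ell s2"
      unfolding reach_def by blast
    then show "\<exists>q0' q1' q2' s1' s2'. q0' \<in> Q0 \<and> q1' \<in> Q - QS \<and>
        run delta q0' s1' q1' \<and> run delta q1' s2' q2' \<and>
        lab ell s1 = lab ell s1' \<and> lab ell s2 = lab ell s2'"
      by metis
  qed
qed

lemma infinite_step_opaque_iff_reach:
  "infinite_step_opaque Q delta Q0 ell QS \<longleftrightarrow>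
    (\<forall>u w. \<forall>q \<in> reach delta ell Q0 u \<inter> QS. reach delta ell {q} w \<noteq> {} \<longrightarrow>
      reach delta ell (reach delta ell Q0 u \<inter> (Q - QS)) w \<noteq> {})"
  using opacity_condition_iff_reach[where P = "\<lambda>_. True"]
  unfolding infinite_step_opaque_def by simp

lemma K_step_opaque_iff_reach:
  "K_step_opaque K Q delta Q0 ell QS \<longleftrightarrow>
    (\<forall>u w. \<forall>q \<in> reach delta ell Q0 u \<inter> QS. length w \<le> K \<longrightarrow> reach delta ell {q} w \<noteq> {} \<longrightarrow>
      reach delta ell (reach delta ell Q0 u \<inter> (Q - QS)) w \<noteq> {})"
  using opacity_condition_iff_reach[where P = "\<lambda>w. length w \<le> K"]
  unfolding K_step_opaque_def by simp

theorem corollary2: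
  fixes Q :: "'q set" and E :: "'e set" and delta :: "('q \<times> 'e \<times> 'q) set"
    and Q0 QS :: "'q set" and Sig :: "'s set" and ell :: "'e \<Rightarrow> 's option" and K :: nat
  assumes "is_LFSA Q E delta Q0 Sig ell"
    and "QS \<subseteq> Q"
    and "K > 0"
    and "int K > 2 ^ card Q - 2"
  shows "infinite_step_opaque Q delta Q0 ell QS \<longleftrightarrow> K_step_opaque K Q delta Q0 ell QS"
proof
  assume "infinite_step_opaque Q delta Q0 ell QS"
  then show "K_step_opaque K Q delta Q0 ell QS"
    unfolding infinite_step_opaque_def K_step_opaque_def by blast
next
  assume K_opaque: "K_step_opaque K Q delta Q0 ell QS"
  from assms(1) have "finite Q" and delta_Q: "delta \<subseteq> Q \<times> E \<times> Q" and "Q0 \<subseteq> Q"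
    by (simp_all add: is_LFSA_def)
  from assms(4) have "int (2 ^ card Q) < int K + 2" by simp
  then have K_bound: "2 ^ card Q - 2 \<le> K" by linarith
  show "infinite_step_opaque Q delta Q0 ell QS"
    unfolding infinite_step_opaque_iff_reach
  proof (intro allI ballI impI)
    fix u w q
    assume q: "q \<in> reach delta ell Q0 u \<inter> QS" and "reach delta ell {q} w \<noteq> {}"
    have "q \<in> Q" using q reach_subset_states[OF \<open>Q0 \<subseteq> Q\<close> delta_Q] by blast
    show "reach delta ell (reach delta ell Q0 u \<inter> (Q - QS)) w \<noteq> {}"
    proof (rule reach_nonempty_if_short_words[OF \<open>finite Q\<close> delta_Q])
      show "{q} \<subseteq> Q" "reach delta ell Q0 u \<inter> (Q - QS) \<subseteq> Q" using \<open>q \<in> Q\<close> by auto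
      show "reach delta ell {q} w \<noteq> {}" by fact
      show "reach delta ell (reach delta ell Q0 u \<inter> (Q - QS)) v \<noteq> {}"
        if "length v \<le> 2 ^ card Q - 2" "reach delta ell {q} v \<noteq> {}" for v
      proof -
        from that(1) K_bound have "length v \<le> K" by linarith
        with K_opaque q that(2) show ?thesis unfolding K_step_opaque_iff_reach by blast
      qed
    qed
  qed
qed

end
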